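(* Let $d\ge2$ and $\gamma\ge2d$. The set $$\mathcal V=\{v\in\mathcal R^{(\gamma)}_\infty: v+w\notin\mathcal R^{(\gamma)}_\infty\text{ for every nonzero } w\in f^{(d,\gamma)}\cdot\ell^\infty(\mathbb Z^d,\mathbb Z)\}$$ is a dense $G_\delta$ subset of $\mathcal R^{(\gamma)}_\infty$ (in the product topology).
   Context: $f^{(d,\gamma)}=\gamma-\sum_{i=1}^d(u_i+u_i^{-1})$, acting on $h\in\ell^\infty(\mathbb Z^d,\mathbb Z)$ by $(f^{(d,\gamma)}\cdot h)_{\mathbf n}=\gamma h_{\mathbf n}-\sum_i(h_{\mathbf n+\mathbf e^{(i)}}+h_{\mathbf n-\mathbf e^{(i)}})$. For nonempty $F\subset\mathbb Z^d$, $\mathsf N_F(\mathbf n)=|F\cap\{\mathbf n\pm\mathbf e^{(i)}\}|$. $\mathcal R^{(\gamma)}_\infty=\{v\in\{0,\dots,\gamma-1\}^{\mathbb Z^d}:$ for every finite nonempty $F\subset\mathbb Z^d$ there is $\mathbf n\in F$ with $v_{\mathbf n}\ge\mathsf N_F(\mathbf n)\}$. *)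

theory Defs
  imports "HOL-Analysis.Analysis"
begin

text \<open>Lattice points of Z^d are functions 'n => int, where 'n is a finite index
type with CARD('n) = d. Configurations are functions (('n => int) => int).\<close>

definition shift_plus :: "('n \<Rightarrow> int) \<Rightarrow> 'n \<Rightarrow> ('n \<Rightarrow> int)" where
  "shift_plus p i = p(i := p i + 1)"

definition shift_minus :: "('n \<Rightarrow> int) \<Rightarrow> 'n \<Rightarrow> ('n \<Rightarrow> int)" where
  "shift_minus p i = p(i := p i - 1)"

text \<open>The action of f^(d,gamma) = gamma - sum_i (u_i + u_i^{-1}).\<close>
definition f_act :: "int \<Rightarrow> (('n::finite \<Rightarrow> int) \<Rightarrow> int) \<Rightarrow> (('n \<Rightarrow> int) \<Rightarrow> int)" where
  "f_act \<gamma> h = (\<lambda>p. \<gamma> * h p - (\<Sum>i\<in>(UNIV::'n set). h (shift_plus p i) + h (shift_minus p i)))"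

definition linf_int :: "(('n \<Rightarrow> int) \<Rightarrow> int) set" where
  "linf_int = {h. \<exists>B. \<forall>p. \<bar>h p\<bar> \<le> B}"

definition nbr_count :: "('n \<Rightarrow> int) set \<Rightarrow> ('n \<Rightarrow> int) \<Rightarrow> nat" where
  "nbr_count F p = card (F \<inter> {q. \<exists>i. q = shift_plus p i \<or> q = shift_minus p i})"

definition R_inf :: "int \<Rightarrow> (('n \<Rightarrow> int) \<Rightarrow> int) set" where
  "R_inf \<gamma> = {v. (\<forall>p. 0 \<le> v p \<and> v p \<le> \<gamma> - 1) \<and>
      (\<forall>F. finite F \<and> F \<noteq> {} \<longrightarrow> (\<exists>p\<in>F. v p \<ge> int (nbr_count F p)))}"

text \<open>Product topology on Z^(Z^d) (discrete factors); R_inf carries the subspace topology,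
which coincides with the product topology on {0..gamma-1}^(Z^d) restricted to R_inf.\<close>
definition config_top :: "(('n \<Rightarrow> int) \<Rightarrow> int) topology" where
  "config_top = product_topology (\<lambda>_. discrete_topology (UNIV::int set)) UNIV"

definition V_set :: "int \<Rightarrow> (('n::finite \<Rightarrow> int) \<Rightarrow> int) set" where
  "V_set \<gamma> = {v \<in> R_inf \<gamma>. \<forall>w \<in> f_act \<gamma> ` linf_int. w \<noteq> (\<lambda>_. 0) \<longrightarrow> (\<lambda>p. v p + w p) \<notin> R_inf \<gamma>}"

end

theory Submission
  imports Defs
begin

(* By the maximum principle, if
      v and v + f.h both lie in R_inf, then (under a sign condition on the extremal values
      when gamma > 2d) the top level set of h is forbidden for v and the bottom level set is
      forbidden for v + f.h; both are therefore infinite.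
   3. Density: any v in R_inf can be modified outside a cube so that it lands in V.  For
      gamma = 2d one puts gamma-1 outside the cube (the complement of a cube is connected,
      which uses d >= 2); for gamma > 2d one puts 0 on the odd sites of a far shell and
      gamma-1 elsewhere.  In both cases one level set of h is trapped in a finite cube.
   4. G_delta: V is the intersection, over bounds B and sites p, of the complements of the
      sets of v admitting a perturbation f.h with |h| <= B and (f.h) p \<noteq> 0.  Membership in
      R_inf fails on a finite window, so these sets are projections of closed sets along the
      compact space of B-bounded h, hence closed. *)

definition nbrs :: "('n \<Rightarrow> int) \<Rightarrow> ('n \<Rightarrow> int) set" where
  "nbrs p = range (shift_plus p) \<union> range (shift_minus p)"

lemma nbr_count_eq: "nbr_count F p = card (F \<inter> nbrs p)"
proof -
  have "{q. \<exists>i. q = shift_plus p i \<or> q = shift_minus p i} = nbrs p"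
    unfolding nbrs_def by auto
  then show ?thesis unfolding nbr_count_def by simp
qed

lemma inj_shift_plus: "inj (shift_plus p)"
  unfolding inj_def shift_plus_def by (metis fun_upd_apply less_add_one order_less_irrefl)

lemma inj_shift_minus: "inj (shift_minus p)"
  unfolding inj_def shift_minus_def by (metis fun_upd_apply diff_less_eq less_add_one order_less_irrefl)

lemma shift_plus_neq_shift_minus: "shift_plus p i \<noteq> shift_minus p j"
proof
  assume "shift_plus p i = shift_minus p j"
  then have "shift_plus p i i = shift_minus p j i" by simp
  then show False unfolding shift_plus_def shift_minus_def by (cases "i = j") auto
qed

lemma finite_nbrs: "finite (nbrs (p :: 'n::finite \<Rightarrow> int))"
  unfolding nbrs_def by simp

lemma sum_UNIV_fun_upd:
  fixes F :: "'n::finite \<Rightarrow> 'a \<Rightarrow> 'b::ab_group_add"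
  shows "(\<Sum>k\<in>UNIV. F k ((p(j := x)) k)) = (\<Sum>k\<in>UNIV. F k (p k)) - F j (p j) + F j x"
proof -
  have "(\<Sum>k\<in>UNIV. F k ((p(j := x)) k)) = F j x + (\<Sum>k\<in>UNIV - {j}. F k ((p(j := x)) k))"
    using sum.remove[of UNIV j "\<lambda>k. F k ((p(j := x)) k)"] by simp
  also have "(\<Sum>k\<in>UNIV - {j}. F k ((p(j := x)) k)) = (\<Sum>k\<in>UNIV - {j}. F k (p k))"
    by (rule sum.cong) auto
  also have "(\<Sum>k\<in>UNIV - {j}. F k (p k)) = (\<Sum>k\<in>UNIV. F k (p k)) - F j (p j)"
    using sum.remove[of UNIV j "\<lambda>k. F k (p k)"] by (simp add: algebra_simps)
  finally show ?thesis by (simp add: algebra_simps)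
qed

lemma nbrs_cases: "q \<in> nbrs p \<Longrightarrow> \<exists>i. q = p(i := p i + 1) \<or> q = p(i := p i - 1)"
  unfolding nbrs_def shift_plus_def shift_minus_def by auto

lemma card_nbrs: "card (nbrs (p :: 'n::finite \<Rightarrow> int)) = 2 * CARD('n)"
proof -
  have "card (nbrs p) = card (range (shift_plus p)) + card (range (shift_minus p))"
    unfolding nbrs_def by (rule card_Un_disjoint) (auto simp: shift_plus_neq_shift_minus)
  also have "\<dots> = 2 * CARD('n)"
    using card_image[OF inj_shift_plus[of p]] card_image[OF inj_shift_minus[of p]] by simp
  finally show ?thesis .
qed

lemma card_Int_nbrs_le: "int (card (S \<inter> nbrs (p :: 'n::finite \<Rightarrow> int))) \<le> 2 * int CARD('n)"
  using card_mono[OF finite_nbrs, of "S \<inter> nbrs p" p] card_nbrs[of p] by simp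

lemma nbrs_subset_if_card:
  assumes "int (card (S \<inter> nbrs (p :: 'n::finite \<Rightarrow> int))) \<ge> 2 * int CARD('n)"
  shows "nbrs p \<subseteq> S"
proof -
  have "card (S \<inter> nbrs p) = card (nbrs p)" using assms card_Int_nbrs_le[of S p] card_nbrs[of p] by simp
  then have "S \<inter> nbrs p = nbrs p" by (intro card_subset_eq finite_nbrs) auto
  then show ?thesis by blast
qed

lemma f_act_eq: "f_act \<gamma> h p = \<gamma> * h p - sum h (nbrs (p :: 'n::finite \<Rightarrow> int))"
proof -
  have "sum h (nbrs p) = sum h (range (shift_plus p)) + sum h (range (shift_minus p))"
    unfolding nbrs_def by (rule sum.union_disjoint) (auto simp: shift_plus_neq_shift_minus)
  also have "\<dots> = (\<Sum>i\<in>UNIV. h (shift_plus p i)) + (\<Sum>i\<in>UNIV. h (shift_minus p i))"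
    by (simp add: sum.reindex[OF inj_shift_plus] sum.reindex[OF inj_shift_minus])
  finally show ?thesis unfolding f_act_def by (simp add: sum.distrib)
qed

lemma f_act_const: "f_act \<gamma> (\<lambda>_. c) (p :: 'n::finite \<Rightarrow> int) = (\<gamma> - 2 * int CARD('n)) * c"
  unfolding f_act_eq by (simp add: card_nbrs algebra_simps)

lemma f_act_uminus: "f_act \<gamma> (\<lambda>q. - h q) (p :: 'n::finite \<Rightarrow> int) = - f_act \<gamma> h p"
  unfolding f_act_eq by (simp add: sum_negf)

lemma f_act_local:
  assumes "\<forall>q\<in>insert p (nbrs p). h' q = h q"
  shows "f_act \<gamma> h' (p :: 'n::finite \<Rightarrow> int) = f_act \<gamma> h p"
  using assms unfolding f_act_eq by (simp cong: sum.cong)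

text \<open>The factor
  (gamma - 2d)(M - 1) accounts for the zeroth order term.\<close>
lemma f_act_at_max:
  fixes h :: "('n::finite \<Rightarrow> int) \<Rightarrow> int"
  assumes le_M: "\<And>q. h q \<le> M" and "h p = M" and "(\<gamma> - 2 * int CARD('n)) * (M - 1) \<ge> 0"
  shows "\<gamma> - int (card ({q. h q = M} \<inter> nbrs p)) \<le> f_act \<gamma> h p"
proof -
  let ?S = "{q. h q = M}"
  let ?c = "int (card (nbrs p \<inter> ?S))" and ?e = "int (card (nbrs p - ?S))"
  have split: "?c + ?e = 2 * int CARD('n)"
    using card_nbrs[of p] card_Int_Diff[OF finite_nbrs, of p ?S] by linarith
  have "sum h (nbrs p) = sum h (nbrs p \<inter> ?S) + sum h (nbrs p - ?S)"
    using sum.Int_Diff[OF finite_nbrs] by blast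
  also have "sum h (nbrs p \<inter> ?S) = ?c * M" by simp
  also have "sum h (nbrs p - ?S) \<le> (\<Sum>q\<in>nbrs p - ?S. M - 1)"
    by (rule sum_mono) (use le_M in \<open>force simp: order_le_less\<close>)
  also have "\<dots> = ?e * (M - 1)" by simp
  finally have "sum h (nbrs p) \<le> ?c * M + ?e * (M - 1)" by simp
  also have "?c * M + ?e * (M - 1) = (?c + ?e) * M - ?e" by (simp add: algebra_simps)
  finally have "sum h (nbrs p) \<le> (?c + ?e) * M - ?e" .
  then have "sum h (nbrs p) \<le> 2 * int CARD('n) * M - 2 * int CARD('n) + ?c"
    unfolding split using split by linarith
  moreover have "card (?S \<inter> nbrs p) = card (nbrs p \<inter> ?S)" by (simp add: Int_commute)
  ultimately show ?thesis
    using assms(2,3) unfolding f_act_eq by (simp add: algebra_simps)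
qed

lemma f_act_at_min:
  fixes h :: "('n::finite \<Rightarrow> int) \<Rightarrow> int"
  assumes "\<And>q. m \<le> h q" and "h p = m" and "(\<gamma> - 2 * int CARD('n)) * (m + 1) \<le> 0"
  shows "f_act \<gamma> h p \<le> int (card ({q. h q = m} \<inter> nbrs p)) - \<gamma>"
proof -
  have "\<gamma> - int (card ({q. - h q = - m} \<inter> nbrs p)) \<le> f_act \<gamma> (\<lambda>q. - h q) p"
    by (rule f_act_at_max) (use assms in \<open>auto simp: algebra_simps\<close>)
  then show ?thesis by (simp add: f_act_uminus)
qed

section \<open>Forbidden sets\<close>

definition forbidden :: "(('n \<Rightarrow> int) \<Rightarrow> int) \<Rightarrow> ('n \<Rightarrow> int) set \<Rightarrow> bool" where
  "forbidden w F \<longleftrightarrow> (\<forall>p\<in>F. w p < int (card (F \<inter> nbrs p)))"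

lemma R_inf_iff:
  "w \<in> R_inf \<gamma> \<longleftrightarrow> (\<forall>p. 0 \<le> w p \<and> w p \<le> \<gamma> - 1) \<and>
     (\<forall>F. finite F \<and> F \<noteq> {} \<longrightarrow> \<not> forbidden w F)"
  unfolding R_inf_def forbidden_def nbr_count_eq by (auto simp: not_less)

lemma R_inf_bounds: "w \<in> R_inf \<gamma> \<Longrightarrow> 0 \<le> w p \<and> w p \<le> \<gamma> - 1"
  unfolding R_inf_iff by blast

lemma forbidden_infinite:
  "w \<in> R_inf \<gamma> \<Longrightarrow> forbidden w F \<Longrightarrow> F \<noteq> {} \<Longrightarrow> infinite F"
  unfolding R_inf_iff by blast

lemma linf_int_extrema:
  assumes "h \<in> linf_int"
  obtains m M where "\<And>q. m \<le> h q" and "\<And>q. h q \<le> M" and "m \<in> range h" and "M \<in> range h"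
proof -
  obtain B where B: "\<And>p. \<bar>h p\<bar> \<le> B" using assms unfolding linf_int_def by blast
  have fin: "finite (range h)"
    by (rule finite_subset[of _ "{-B..B}"]) (use B in \<open>auto simp: abs_le_iff\<close>, metis minus_le_iff)
  show thesis
  proof (rule that)
    show "Min (range h) \<le> h q" and "h q \<le> Max (range h)" for q using fin by simp_all
    show "Min (range h) \<in> range h" and "Max (range h) \<in> range h"
      using fin by (simp_all add: Min_in Max_in)
  qed
qed

lemma top_level_forbidden:
  fixes h :: "('n::finite \<Rightarrow> int) \<Rightarrow> int"
  assumes "\<And>q. h q \<le> M" and "(\<gamma> - 2 * int CARD('n)) * (M - 1) \<ge> 0"
    and "\<And>p. v p + f_act \<gamma> h p \<le> \<gamma> - 1"
  shows "forbidden v {q. h q = M}"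
  unfolding forbidden_def
proof
  fix p assume "p \<in> {q. h q = M}"
  then have "\<gamma> - int (card ({q. h q = M} \<inter> nbrs p)) \<le> f_act \<gamma> h p"
    using assms(1,2) by (intro f_act_at_max) auto
  then show "v p < int (card ({q. h q = M} \<inter> nbrs p))" using assms(3)[of p] by simp
qed

lemma bottom_level_forbidden:
  fixes h :: "('n::finite \<Rightarrow> int) \<Rightarrow> int"
  assumes "\<And>q. m \<le> h q" and "(\<gamma> - 2 * int CARD('n)) * (m + 1) \<le> 0"
    and v_le: "\<And>p. v p \<le> \<gamma> - 1" and u: "(\<lambda>p. v p + f_act \<gamma> h p) \<in> R_inf \<gamma>"
  shows "forbidden (\<lambda>p. v p + f_act \<gamma> h p) {q. h q = m}"
    and "\<And>p. h p = m \<Longrightarrow> \<gamma> - int (card ({q. h q = m} \<inter> nbrs p)) \<le> v p"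
proof -
  have f_le: "f_act \<gamma> h p \<le> int (card ({q. h q = m} \<inter> nbrs p)) - \<gamma>" if "h p = m" for p
    using assms(1,2) that by (intro f_act_at_min) auto
  show "forbidden (\<lambda>p. v p + f_act \<gamma> h p) {q. h q = m}"
    unfolding forbidden_def
  proof
    fix p assume "p \<in> {q. h q = m}"
    then show "v p + f_act \<gamma> h p < int (card ({q. h q = m} \<inter> nbrs p))"
      using f_le[of p] v_le[of p] by simp
  qed
  show "\<gamma> - int (card ({q. h q = m} \<inter> nbrs p)) \<le> v p" if "h p = m" for p
    using f_le[OF that] R_inf_bounds[OF u, of p] by simp
qed

section \<open>Cubes and the connectedness of their complements\<close>

definition cube :: "int \<Rightarrow> ('n \<Rightarrow> int) set" where
  "cube r = {p. \<forall>i. \<bar>p i\<bar> \<le> r}"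

lemma notin_cube_iff: "p \<notin> cube r \<longleftrightarrow> (\<exists>i. r < \<bar>p i\<bar>)"
  unfolding cube_def by (auto simp: not_le)

lemma cube_mono: "r \<le> s \<Longrightarrow> cube r \<subseteq> cube s"
  unfolding cube_def using order_trans by blast

lemma finite_cube: "finite (cube r :: ('n::finite \<Rightarrow> int) set)"
proof (rule finite_subset)
  show "cube r \<subseteq> PiE UNIV (\<lambda>_. {-r..r})"
    unfolding cube_def by (auto simp: abs_le_iff) (meson minus_le_iff)
  show "finite (PiE (UNIV::'n set) (\<lambda>_. {-r..r}))" by (rule finite_PiE) auto
qed

lemma finite_subset_cube:
  assumes "finite (J :: ('n::finite \<Rightarrow> int) set)"
  shows "\<exists>r. J \<subseteq> cube r"
proof
  show "J \<subseteq> cube (\<Sum>p\<in>J. \<Sum>i\<in>UNIV. \<bar>p i\<bar>)"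
    unfolding cube_def
  proof (intro subsetI CollectI allI)
    fix p i assume "p \<in> J"
    have "\<bar>p i\<bar> \<le> (\<Sum>i\<in>UNIV. \<bar>p i\<bar>)" by (rule member_le_sum) auto
    also have "\<dots> \<le> (\<Sum>p\<in>J. \<Sum>i\<in>UNIV. \<bar>p i\<bar>)"
      by (rule member_le_sum) (use \<open>p \<in> J\<close> assms in \<open>auto intro: sum_nonneg\<close>)
    finally show "\<bar>p i\<bar> \<le> (\<Sum>p\<in>J. \<Sum>i\<in>UNIV. \<bar>p i\<bar>)" .
  qed
qed

lemma step_towards:
  fixes p t :: "'n::finite \<Rightarrow> int"
  assumes "t j \<noteq> p j"
  shows "p(j := p j + sgn (t j - p j)) \<in> nbrs p"
    and "(\<Sum>k\<in>UNIV. \<bar>t k - (p(j := p j + sgn (t j - p j))) k\<bar>) = (\<Sum>k\<in>UNIV. \<bar>t k - p k\<bar>) - 1"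
proof -
  show "p(j := p j + sgn (t j - p j)) \<in> nbrs p"
    unfolding nbrs_def shift_plus_def shift_minus_def using assms by (cases "p j < t j") auto
  have "\<bar>t j - (p j + sgn (t j - p j))\<bar> = \<bar>t j - p j\<bar> - 1"
    using assms by (cases "p j < t j") auto
  then show "(\<Sum>k\<in>UNIV. \<bar>t k - (p(j := p j + sgn (t j - p j))) k\<bar>) = (\<Sum>k\<in>UNIV. \<bar>t k - p k\<bar>) - 1"
    using sum_UNIV_fun_upd[of "\<lambda>k x. \<bar>t k - x\<bar>" p j] by simp
qed

text \<open>Let A contain the neighbours of each of its points outside the cube of radius R.  From a
  point of A with a far coordinate i, A contains every point with the same i-th coordinate:
  walk towards it one unit step at a time (induction on the l1-distance), staying far away.\<close>
lemma reach_fixing_far_coordinate: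
  fixes A :: "('n::finite \<Rightarrow> int) set"
  assumes closed: "\<forall>q\<in>A - cube R. nbrs q \<subseteq> A"
    and "p \<in> A" and "R < \<bar>p i\<bar>" and "t i = p i"
  shows "t \<in> A"
proof -
  have "\<forall>p. p \<in> A \<and> R < \<bar>p i\<bar> \<and> p i = t i \<and> nat (\<Sum>k\<in>UNIV. \<bar>t k - p k\<bar>) = n \<longrightarrow> t \<in> A" for n
  proof (induction n)
    case 0
    show ?case
    proof (intro allI impI)
      fix p assume p: "p \<in> A \<and> R < \<bar>p i\<bar> \<and> p i = t i \<and> nat (\<Sum>k\<in>UNIV. \<bar>t k - p k\<bar>) = 0"
      moreover have "0 \<le> (\<Sum>k\<in>UNIV. \<bar>t k - p k\<bar>)" by (rule sum_nonneg) simp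
      ultimately have "(\<Sum>k\<in>UNIV. \<bar>t k - p k\<bar>) = 0" by simp
      then have "t = p" by (simp add: sum_nonneg_eq_0_iff fun_eq_iff)
      then show "t \<in> A" using p by simp
    qed
  next
    case (Suc n)
    show ?case
    proof (intro allI impI)
      fix p assume p: "p \<in> A \<and> R < \<bar>p i\<bar> \<and> p i = t i \<and> nat (\<Sum>k\<in>UNIV. \<bar>t k - p k\<bar>) = Suc n"
      then have "t \<noteq> p" by auto
      then obtain j where j: "t j \<noteq> p j" by auto
      let ?p' = "p(j := p j + sgn (t j - p j))"
      have "p \<notin> cube R" unfolding notin_cube_iff using p by blast
      then have "?p' \<in> A" using closed p step_towards(1)[of t j p, OF j] by blast
      moreover have "R < \<bar>?p' i\<bar> \<and> ?p' i = t i" using p j by auto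
      moreover have "nat (\<Sum>k\<in>UNIV. \<bar>t k - ?p' k\<bar>) = n" using p step_towards(2)[of t j p, OF j] by linarith
      ultimately show "t \<in> A" using Suc.IH by blast
    qed
  qed
  then show ?thesis using assms(2-4) by auto
qed

lemma outside_cube_connected:
  fixes A :: "('n::finite \<Rightarrow> int) set"
  assumes card: "CARD('n) \<ge> 2" and closed: "\<forall>q\<in>A - cube R. nbrs q \<subseteq> A"
    and p: "p \<in> A - cube R" and q: "q \<notin> cube R"
  shows "q \<in> A"
proof -
  have across: "q \<in> A" if "p' \<in> A" "R < \<bar>p' i\<bar>" "R < \<bar>q k\<bar>" "k \<noteq> i" for p' i k
  proof -
    have "q(i := p' i) \<in> A" by (rule reach_fixing_far_coordinate[OF closed that(1,2)]) simp
    moreover have "R < \<bar>(q(i := p' i)) k\<bar>" and "q k = (q(i := p' i)) k" using that(3,4) by simp_all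
    ultimately show ?thesis by (rule reach_fixing_far_coordinate[OF closed])
  qed
  have "p \<notin> cube R" using p by blast
  then obtain i where i: "R < \<bar>p i\<bar>" unfolding notin_cube_iff by blast
  obtain k where k: "R < \<bar>q k\<bar>" using q unfolding notin_cube_iff by blast
  show ?thesis
  proof (cases "k = i")
    case False
    then show ?thesis using across p i k by blast
  next
    case True
    have "card (UNIV - {i}) \<noteq> 0" using card by (simp add: card_Diff_singleton)
    then have "UNIV - {i} \<noteq> {}" by (metis card.empty)
    then obtain j where j: "j \<noteq> i" by blast
    have "p(j := R + 1) \<in> A"
      using reach_fixing_far_coordinate[where p = p and i = i and t = "p(j := R + 1)", OF closed _ i] p j
      by simp
    moreover have "R < \<bar>(p(j := R + 1)) j\<bar>" by simp
    ultimately show ?thesis using across k True j by blast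
  qed
qed

section \<open>A checkerboard shell\<close>

definition odd_shell :: "int \<Rightarrow> ('n::finite \<Rightarrow> int) set" where
  "odd_shell r = {p. p \<notin> cube (r + 1) \<and> odd (\<Sum>i\<in>UNIV. p i)}"

lemma nbrs_parity:
  assumes "q \<in> nbrs (p :: 'n::finite \<Rightarrow> int)"
  shows "odd (\<Sum>j\<in>UNIV. q j) \<longleftrightarrow> even (\<Sum>j\<in>UNIV. p j)"
proof -
  obtain i where "q = p(i := p i + 1) \<or> q = p(i := p i - 1)" using nbrs_cases[OF assms] by blast
  then have "(\<Sum>j\<in>UNIV. q j) = (\<Sum>j\<in>UNIV. p j) + 1 \<or> (\<Sum>j\<in>UNIV. q j) = (\<Sum>j\<in>UNIV. p j) - 1"
    using sum_UNIV_fun_upd[of "\<lambda>_ x. x" p i] by auto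
  then show ?thesis by auto
qed

lemma nbrs_abs:
  assumes "q \<in> nbrs p"
  shows "\<bar>p j\<bar> - 1 \<le> \<bar>q j\<bar>"
proof -
  obtain i where "q = p(i := p i + 1) \<or> q = p(i := p i - 1)" using nbrs_cases[OF assms] by blast
  then show ?thesis by (cases "i = j") auto
qed

lemma odd_shell_not_cube: "p \<in> odd_shell r \<Longrightarrow> p \<notin> cube r"
  unfolding odd_shell_def using cube_mono[of r "r + 1"] by auto

lemma nbrs_odd_shell:
  assumes "p \<in> odd_shell r" and "q \<in> nbrs p"
  shows "q \<notin> cube r" and "q \<notin> odd_shell r"
proof -
  obtain i where "r + 1 < \<bar>p i\<bar>" using assms(1) unfolding odd_shell_def notin_cube_iff by blast
  then have "r < \<bar>q i\<bar>" using nbrs_abs[OF assms(2), of i] by linarith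
  then show "q \<notin> cube r" unfolding notin_cube_iff by blast
  have "odd (\<Sum>j\<in>UNIV. p j)" using assms(1) unfolding odd_shell_def by simp
  then have "even (\<Sum>j\<in>UNIV. q j)" using nbrs_parity[OF assms(2)] by simp
  then show "q \<notin> odd_shell r" unfolding odd_shell_def by simp
qed

lemma nbrs_far_even:
  assumes "p \<notin> cube (r + 2)" and "even (\<Sum>i\<in>UNIV. p i)" and "q \<in> nbrs p"
  shows "q \<in> odd_shell r"
proof -
  obtain i where "r + 2 < \<bar>p i\<bar>" using assms(1) unfolding notin_cube_iff by blast
  then have "r + 1 < \<bar>q i\<bar>" using nbrs_abs[OF assms(3), of i] by linarith
  then have "q \<notin> cube (r + 1)" unfolding notin_cube_iff by blast
  moreover have "odd (\<Sum>j\<in>UNIV. q j)" using nbrs_parity[OF assms(3)] assms(2) by simp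
  ultimately show ?thesis unfolding odd_shell_def by simp
qed

section \<open>Extensions into V\<close>

lemma V_set_iff:
  "v \<in> V_set \<gamma> \<longleftrightarrow> v \<in> R_inf \<gamma> \<and>
     \<not> (\<exists>h\<in>linf_int. f_act \<gamma> h \<noteq> (\<lambda>_. 0) \<and> (\<lambda>q. v q + f_act \<gamma> h q) \<in> R_inf \<gamma>)"
  unfolding V_set_def by blast

lemma V_set_subset: "V_set \<gamma> \<subseteq> R_inf \<gamma>"
  using V_set_iff by blast

lemma f_act_flat:
  fixes h :: "('n::finite \<Rightarrow> int) \<Rightarrow> int"
  assumes "\<And>q. m \<le> h q" and "\<And>q. h q \<le> M" and "M \<le> m"
  shows "f_act \<gamma> h = (\<lambda>_. (\<gamma> - 2 * int CARD('n)) * m)"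
proof -
  have flat: "h = (\<lambda>_. m)"
  proof
    show "h q = m" for q using assms(1)[of q] assms(2)[of q] assms(3) by linarith
  qed
  show ?thesis unfolding flat by (rule ext) (rule f_act_const)
qed

lemma forbidden_mono: "forbidden w' F \<Longrightarrow> (\<And>p. p \<in> F \<Longrightarrow> w p \<le> w' p) \<Longrightarrow> forbidden w F"
  unfolding forbidden_def by fastforce

definition fill_outside :: "int \<Rightarrow> int \<Rightarrow> (('n \<Rightarrow> int) \<Rightarrow> int) \<Rightarrow> ('n \<Rightarrow> int) \<Rightarrow> int" where
  "fill_outside r c v = (\<lambda>p. if p \<in> cube r then v p else c)"

definition fill_shell :: "int \<Rightarrow> int \<Rightarrow> (('n::finite \<Rightarrow> int) \<Rightarrow> int) \<Rightarrow> ('n \<Rightarrow> int) \<Rightarrow> int" where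
  "fill_shell r c v = (\<lambda>p. if p \<in> cube r then v p else if p \<in> odd_shell r then 0 else c)"

lemma fill_outside_R_inf:
  fixes v :: "('n \<Rightarrow> int) \<Rightarrow> int"
  assumes v: "v \<in> R_inf \<gamma>"
  shows "fill_outside r (\<gamma> - 1) v \<in> R_inf \<gamma>"
  unfolding R_inf_iff
proof (intro conjI allI impI)
  show "0 \<le> fill_outside r (\<gamma> - 1) v p" "fill_outside r (\<gamma> - 1) v p \<le> \<gamma> - 1" for p
    using R_inf_bounds[OF v, of p] unfolding fill_outside_def by auto
  fix F :: "('n \<Rightarrow> int) set" assume "finite F \<and> F \<noteq> {}"
  then have "\<not> forbidden v F" using v unfolding R_inf_iff by blast
  moreover have "v p \<le> fill_outside r (\<gamma> - 1) v p" for p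
    using R_inf_bounds[OF v, of p] unfolding fill_outside_def by auto
  ultimately show "\<not> forbidden (fill_outside r (\<gamma> - 1) v) F" using forbidden_mono by blast
qed

text \<open>In the critical case an infinite forbidden set S for fill_outside r (gamma - 1) v
  contains all 2d neighbours of each of its sites outside the cube, hence, by connectedness,
  the whole outside of the cube.\<close>
lemma critical_forbidden_covers_outside:
  fixes S :: "('n::finite \<Rightarrow> int) set"
  assumes card: "CARD('n) \<ge> 2" and crit: "\<gamma> = 2 * int CARD('n)"
    and S: "forbidden (fill_outside r (\<gamma> - 1) v) S" "infinite S"
  shows "- cube r \<subseteq> S"
proof -
  have closed: "\<forall>q\<in>S - cube r. nbrs q \<subseteq> S"
  proof
    fix q assume "q \<in> S - cube r"
    then have "\<gamma> - 1 < int (card (S \<inter> nbrs q))"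
      using S(1) unfolding forbidden_def fill_outside_def by auto
    then show "nbrs q \<subseteq> S" using crit by (intro nbrs_subset_if_card) simp
  qed
  have "\<not> S \<subseteq> cube r" using S(2) finite_subset[OF _ finite_cube] by blast
  then obtain p0 where "p0 \<in> S - cube r" by blast
  then show ?thesis by (auto intro: outside_cube_connected[OF card closed])
qed

text \<open>For a perturbation by f.h the top level set of h is forbidden
  for the configuration and infinite, so it contains the outside of the cube; the bottom level
  set is then confined to the cube, yet forbidden for the perturbed configuration.\<close>
lemma critical_extension_in_V:
  fixes v :: "('n::finite \<Rightarrow> int) \<Rightarrow> int"
  assumes card: "CARD('n) \<ge> 2" and crit: "\<gamma> = 2 * int CARD('n)" and v: "v \<in> R_inf \<gamma>"
  shows "fill_outside r (\<gamma> - 1) v \<in> V_set \<gamma>"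
  unfolding V_set_iff
proof (intro conjI notI)
  let ?w = "fill_outside r (\<gamma> - 1) v"
  show w: "?w \<in> R_inf \<gamma>" by (rule fill_outside_R_inf[OF v])
  assume "\<exists>h\<in>linf_int. f_act \<gamma> h \<noteq> (\<lambda>_. 0) \<and> (\<lambda>q. ?w q + f_act \<gamma> h q) \<in> R_inf \<gamma>"
  then obtain h where h: "h \<in> linf_int" and nonzero: "f_act \<gamma> h \<noteq> (\<lambda>_. 0)"
    and u: "(\<lambda>q. ?w q + f_act \<gamma> h q) \<in> R_inf \<gamma>" by blast
  obtain m M where m_le: "\<And>q. m \<le> h q" and le_M: "\<And>q. h q \<le> M"
    and attained: "m \<in> range h" "M \<in> range h"
    using linf_int_extrema[OF h] by blast
  have "m < M"
  proof (rule ccontr)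
    assume "\<not> m < M"
    then have "f_act \<gamma> h = (\<lambda>_. (\<gamma> - 2 * int CARD('n)) * m)"
      by (intro f_act_flat[where m = m and M = M]) (use m_le le_M in auto)
    then show False using nonzero crit by simp
  qed
  have w_le: "?w p \<le> \<gamma> - 1" for p using R_inf_bounds[OF w] by blast
  have "forbidden ?w {q. h q = M}"
    using le_M crit R_inf_bounds[OF u] by (intro top_level_forbidden[where \<gamma> = \<gamma>]) auto
  moreover have "infinite {q. h q = M}"
    using forbidden_infinite[OF w calculation] attained by blast
  ultimately have "- cube r \<subseteq> {q. h q = M}" by (rule critical_forbidden_covers_outside[OF card crit])
  then have "{q. h q = m} \<subseteq> cube r" using \<open>m < M\<close> by auto
  moreover have "forbidden (\<lambda>q. ?w q + f_act \<gamma> h q) {q. h q = m}"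
    using m_le crit by (intro bottom_level_forbidden(1)[where \<gamma> = \<gamma>, OF _ _ w_le u]) auto
  ultimately show False
    using forbidden_infinite[OF u] finite_subset[OF _ finite_cube] attained by blast
qed

text \<open>In the supercritical case every forbidden set of the shell filling lies in the cube:
  sites off the shell carry gamma - 1 >= 2d, shell sites carry 0 but have only such
  neighbours.\<close>
lemma fill_shell_forbidden_in_cube:
  fixes F :: "('n::finite \<Rightarrow> int) set"
  assumes super: "\<gamma> > 2 * int CARD('n)" and F: "forbidden (fill_shell r (\<gamma> - 1) v) F"
  shows "F \<subseteq> cube r"
proof
  have off_shell: False if "p \<in> F" "p \<notin> cube r" "p \<notin> odd_shell r" for p
    using F that card_Int_nbrs_le[of F p] super unfolding forbidden_def fill_shell_def by fastforce
  fix p assume "p \<in> F"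
  show "p \<in> cube r"
  proof (rule ccontr)
    assume "p \<notin> cube r"
    then have shell: "p \<in> odd_shell r" using off_shell \<open>p \<in> F\<close> by blast
    then have "0 < card (F \<inter> nbrs p)"
      using F \<open>p \<in> F\<close> odd_shell_not_cube unfolding forbidden_def fill_shell_def by force
    then obtain q where "q \<in> F" "q \<in> nbrs p" by (metis card.empty disjoint_iff less_irrefl)
    then show False using off_shell nbrs_odd_shell[OF shell] by blast
  qed
qed

lemma fill_shell_R_inf:
  fixes v :: "('n::finite \<Rightarrow> int) \<Rightarrow> int"
  assumes super: "\<gamma> > 2 * int CARD('n)" and v: "v \<in> R_inf \<gamma>"
  shows "fill_shell r (\<gamma> - 1) v \<in> R_inf \<gamma>"
  unfolding R_inf_iff
proof (intro conjI allI impI notI)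
  show "0 \<le> fill_shell r (\<gamma> - 1) v p" "fill_shell r (\<gamma> - 1) v p \<le> \<gamma> - 1" for p
    using R_inf_bounds[OF v, of p] super unfolding fill_shell_def by auto
  fix F :: "('n \<Rightarrow> int) set" assume F: "finite F \<and> F \<noteq> {}"
    and forb: "forbidden (fill_shell r (\<gamma> - 1) v) F"
  have "fill_shell r (\<gamma> - 1) v p = v p" if "p \<in> F" for p
    using fill_shell_forbidden_in_cube[OF super forb] that unfolding fill_shell_def by auto
  then have "forbidden v F" using forb unfolding forbidden_def by simp
  then show False using v F unfolding R_inf_iff by blast
qed

text \<open>A set forbidden for a nonnegative configuration u, on which the shell filling is at
  least gamma minus the neighbour count, avoids the shell and hence lies in a slightly larger
  cube: beyond it, every site off the shell is even and so has all its neighbours in the shell.\<close>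
lemma fill_shell_bottom_in_cube:
  fixes T :: "('n::finite \<Rightarrow> int) set"
  assumes super: "\<gamma> > 2 * int CARD('n)"
    and large: "\<And>p. p \<in> T \<Longrightarrow> \<gamma> - int (card (T \<inter> nbrs p)) \<le> fill_shell r (\<gamma> - 1) v p"
    and forb: "forbidden u T" and u_nonneg: "\<And>p. 0 \<le> u p"
  shows "T \<subseteq> cube (r + 2)"
proof
  have off_shell: "p \<notin> odd_shell r" if "p \<in> T" for p
    using large[OF that] odd_shell_not_cube card_Int_nbrs_le[of T p] super
    unfolding fill_shell_def by force
  fix p assume "p \<in> T"
  show "p \<in> cube (r + 2)"
  proof (rule ccontr)
    assume far: "p \<notin> cube (r + 2)"
    then have "p \<notin> cube (r + 1)" using cube_mono[of "r + 1" "r + 2"] by auto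
    then have "even (\<Sum>i\<in>UNIV. p i)" using off_shell[OF \<open>p \<in> T\<close>] unfolding odd_shell_def by simp
    then have "T \<inter> nbrs p = {}" using nbrs_far_even[OF far] off_shell by blast
    then show False using forb \<open>p \<in> T\<close> u_nonneg[of p] unfolding forbidden_def by force
  qed
qed

text \<open>For a perturbation by f.h, if max h > 0 the top level
  set of h is forbidden for the configuration, and if min h < 0 the bottom level set is
  forbidden for the perturbed configuration; either way it is trapped in a cube.  Otherwise
  h = 0.\<close>
lemma supercritical_extension_in_V:
  fixes v :: "('n::finite \<Rightarrow> int) \<Rightarrow> int"
  assumes super: "\<gamma> > 2 * int CARD('n)" and v: "v \<in> R_inf \<gamma>"
  shows "fill_shell r (\<gamma> - 1) v \<in> V_set \<gamma>"
  unfolding V_set_iff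
proof (intro conjI notI)
  let ?w = "fill_shell r (\<gamma> - 1) v"
  show w: "?w \<in> R_inf \<gamma>" by (rule fill_shell_R_inf[OF super v])
  assume "\<exists>h\<in>linf_int. f_act \<gamma> h \<noteq> (\<lambda>_. 0) \<and> (\<lambda>q. ?w q + f_act \<gamma> h q) \<in> R_inf \<gamma>"
  then obtain h where h: "h \<in> linf_int" and nonzero: "f_act \<gamma> h \<noteq> (\<lambda>_. 0)"
    and u: "(\<lambda>q. ?w q + f_act \<gamma> h q) \<in> R_inf \<gamma>" by blast
  obtain m M where m_le: "\<And>q. m \<le> h q" and le_M: "\<And>q. h q \<le> M"
    and attained: "m \<in> range h" "M \<in> range h"
    using linf_int_extrema[OF h] by blast
  have w_le: "?w p \<le> \<gamma> - 1" for p using R_inf_bounds[OF w] by blast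
  consider "1 \<le> M" | "m \<le> -1" | "M \<le> 0" "0 \<le> m" by linarith
  then show False
  proof cases
    case 1
    then have "forbidden ?w {q. h q = M}"
      using le_M super R_inf_bounds[OF u] by (intro top_level_forbidden[where \<gamma> = \<gamma>]) auto
    then have "{q. h q = M} \<subseteq> cube r" by (rule fill_shell_forbidden_in_cube[OF super])
    then show False
      using forbidden_infinite[OF w \<open>forbidden ?w _\<close>] finite_subset[OF _ finite_cube] attained by blast
  next
    case 2
    then have bottom: "(\<gamma> - 2 * int CARD('n)) * (m + 1) \<le> 0"
      using super by (simp add: mult_nonneg_nonpos)
    note level = bottom_level_forbidden[where \<gamma> = \<gamma>, OF m_le bottom w_le u]
    have "{q. h q = m} \<subseteq> cube (r + 2)"
      using level R_inf_bounds[OF u] by (intro fill_shell_bottom_in_cube[OF super]) auto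
    then show False
      using forbidden_infinite[OF u level(1)] finite_subset[OF _ finite_cube] attained by blast
  next
    case 3
    then have "f_act \<gamma> h = (\<lambda>_. (\<gamma> - 2 * int CARD('n)) * m)"
      by (intro f_act_flat[where m = m and M = M]) (use m_le le_M in auto)
    moreover have "m = 0" using 3 m_le[of undefined] le_M[of undefined] by linarith
    ultimately have "f_act \<gamma> h = (\<lambda>_. 0)" by simp
    then show False using nonzero by simp
  qed
qed

lemma extension_in_V:
  fixes v :: "('n::finite \<Rightarrow> int) \<Rightarrow> int"
  assumes card: "CARD('n) \<ge> 2" and "\<gamma> \<ge> 2 * int CARD('n)" and v: "v \<in> R_inf \<gamma>"
  shows "\<exists>v'\<in>V_set \<gamma>. \<forall>p\<in>cube r. v' p = v p"
proof (cases "\<gamma> = 2 * int CARD('n)")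
  case True
  show ?thesis
    by (rule bexI[OF _ critical_extension_in_V[OF card True v, of r]]) (simp add: fill_outside_def)
next
  case False
  then have "\<gamma> > 2 * int CARD('n)" using assms(2) by simp
  show ?thesis
    by (rule bexI[OF _ supercritical_extension_in_V[OF \<open>\<gamma> > _\<close> v, of r]]) (simp add: fill_shell_def)
qed

section \<open>The product topology on configurations\<close>

lemma topspace_config_top [simp]: "topspace config_top = UNIV"
  unfolding config_top_def by simp

lemma openin_cylinder:
  assumes "finite J"
  shows "openin config_top {w. \<forall>q\<in>J. w q = v q}"
proof -
  have "{w. \<forall>q\<in>J. w q = v q} = PiE UNIV (\<lambda>q. if q \<in> J then {v q} else UNIV)"
    by (auto simp: PiE_iff split: if_splits)
  then show ?thesis unfolding config_top_def
    by (simp only:) (rule product_topology_basis, use assms in \<open>auto intro: finite_subset\<close>)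
qed

lemma open_contains_cube_cylinder:
  fixes v :: "('n::finite \<Rightarrow> int) \<Rightarrow> int"
  assumes "openin config_top U" and "v \<in> U"
  shows "\<exists>r. {w. \<forall>p\<in>cube r. w p = v p} \<subseteq> U"
proof -
  obtain X where X: "v \<in> PiE UNIV X" "finite {i. X i \<noteq> UNIV}" "PiE UNIV X \<subseteq> U"
    using product_topology_open_contains_basis[OF assms[unfolded config_top_def]] by auto
  obtain r where r: "{i. X i \<noteq> UNIV} \<subseteq> cube r" using finite_subset_cube[OF X(2)] by blast
  have "w \<in> PiE UNIV X" if w: "\<forall>p\<in>cube r. w p = v p" for w
  proof -
    have "w i \<in> X i" for i
    proof (cases "X i = UNIV")
      case False
      then have "w i = v i" using r w by blast
      then show ?thesis using X(1) by (auto simp: PiE_iff)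
    qed simp
    then show ?thesis by (simp add: PiE_iff)
  qed
  then show ?thesis using X(3) by blast
qed

lemma V_set_dense:
  assumes "CARD('n::finite) \<ge> 2" and "\<gamma> \<ge> 2 * int CARD('n)"
  shows "(subtopology config_top (R_inf \<gamma>)) closure_of (V_set \<gamma> :: (('n \<Rightarrow> int) \<Rightarrow> int) set) = R_inf \<gamma>"
proof
  show "subtopology config_top (R_inf \<gamma>) closure_of V_set \<gamma> \<subseteq> R_inf \<gamma>"
    using closure_of_subset_topspace by fastforce
  show "R_inf \<gamma> \<subseteq> subtopology config_top (R_inf \<gamma>) closure_of (V_set \<gamma> :: (('n \<Rightarrow> int) \<Rightarrow> int) set)"
  proof
    fix v :: "('n \<Rightarrow> int) \<Rightarrow> int" assume v: "v \<in> R_inf \<gamma>"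
    show "v \<in> subtopology config_top (R_inf \<gamma>) closure_of V_set \<gamma>"
      unfolding in_closure_of
    proof (intro conjI allI impI)
      show "v \<in> topspace (subtopology config_top (R_inf \<gamma>))" using v by simp
      fix T assume "v \<in> T \<and> openin (subtopology config_top (R_inf \<gamma>)) T"
      then obtain U where "openin config_top U" "v \<in> U" "T = U \<inter> R_inf \<gamma>"
        by (auto simp: openin_subtopology)
      moreover obtain r where "{w. \<forall>p\<in>cube r. w p = v p} \<subseteq> U"
        using open_contains_cube_cylinder[OF \<open>openin config_top U\<close> \<open>v \<in> U\<close>] by blast
      moreover obtain v' where "v' \<in> V_set \<gamma>" "\<forall>p\<in>cube r. v' p = v p"
        using extension_in_V[OF assms v] by blast
      ultimately show "\<exists>y. y \<in> V_set \<gamma> \<and> y \<in> T" using V_set_subset by blast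
    qed
  qed
qed

section \<open>V is a G-delta set\<close>

lemma not_R_inf_local:
  assumes "u \<notin> R_inf \<gamma>"
  shows "\<exists>J. finite J \<and> (\<forall>u'. (\<forall>q\<in>J. u' q = u q) \<longrightarrow> u' \<notin> R_inf \<gamma>)"
proof (cases "\<forall>p. 0 \<le> u p \<and> u p \<le> \<gamma> - 1")
  case False
  then obtain p where "\<not> (0 \<le> u p \<and> u p \<le> \<gamma> - 1)" by blast
  then have "\<forall>u'. (\<forall>q\<in>{p}. u' q = u q) \<longrightarrow> u' \<notin> R_inf \<gamma>" using R_inf_bounds by (metis singletonI)
  then show ?thesis by blast
next
  case True
  then obtain F where F: "finite F" "F \<noteq> {}" "forbidden u F"
    using assms unfolding R_inf_iff by blast
  have "u' \<notin> R_inf \<gamma>" if "\<forall>q\<in>F. u' q = u q" for u'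
  proof -
    have "forbidden u' F" using F(3) that unfolding forbidden_def by simp
    then show ?thesis using F(1,2) unfolding R_inf_iff by blast
  qed
  then show ?thesis using F(1) by blast
qed

definition perturbing_pairs ::
    "int \<Rightarrow> ('n::finite \<Rightarrow> int) \<Rightarrow> ((('n \<Rightarrow> int) \<Rightarrow> int) \<times> (('n \<Rightarrow> int) \<Rightarrow> int)) set" where
  "perturbing_pairs \<gamma> p = {(v, h). f_act \<gamma> h p \<noteq> 0 \<and> (\<lambda>q. v q + f_act \<gamma> h q) \<in> R_inf \<gamma>}"

text \<open>Not being a perturbing pair is again witnessed on a finite window, since (f.h) q only
  depends on h near q.\<close>
lemma not_perturbing_pair_local:
  assumes "(v, h) \<notin> perturbing_pairs \<gamma> p"
  shows "\<exists>J. finite J \<and>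
    (\<forall>v' h'. (\<forall>q\<in>J. v' q = v q \<and> h' q = h q) \<longrightarrow> (v', h') \<notin> perturbing_pairs \<gamma> p)"
proof (cases "f_act \<gamma> h p = 0")
  case True
  have "(v', h') \<notin> perturbing_pairs \<gamma> p"
    if "\<forall>q\<in>insert p (nbrs p). v' q = v q \<and> h' q = h q" for v' h'
    using f_act_local[of p h' h \<gamma>] that True unfolding perturbing_pairs_def by simp
  then show ?thesis using finite_nbrs by blast
next
  case False
  let ?u = "\<lambda>q. v q + f_act \<gamma> h q"
  have "?u \<notin> R_inf \<gamma>" using assms False unfolding perturbing_pairs_def by simp
  then obtain J0 where J0: "finite J0" "\<forall>u'. (\<forall>q\<in>J0. u' q = ?u q) \<longrightarrow> u' \<notin> R_inf \<gamma>"
    using not_R_inf_local by blast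
  define J where "J = (\<Union>q\<in>J0. insert q (nbrs q))"
  have "(v', h') \<notin> perturbing_pairs \<gamma> p" if agree: "\<forall>q\<in>J. v' q = v q \<and> h' q = h q" for v' h'
  proof -
    have "v' q + f_act \<gamma> h' q = ?u q" if "q \<in> J0" for q
      using agree f_act_local[of q h' h \<gamma>] that unfolding J_def by simp
    then show ?thesis using J0(2) unfolding perturbing_pairs_def by auto
  qed
  moreover have "finite J" unfolding J_def using J0(1) finite_nbrs by blast
  ultimately show ?thesis by blast
qed

lemma closedin_perturbing_pairs:
  "closedin (prod_topology config_top config_top) (perturbing_pairs \<gamma> p)"
proof -
  have "openin (prod_topology config_top config_top) (- perturbing_pairs \<gamma> p)"
    unfolding openin_subopen[of _ "- perturbing_pairs \<gamma> p"]
  proof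
    fix x assume "x \<in> - perturbing_pairs \<gamma> p"
    moreover obtain v h where x: "x = (v, h)" by (rule prod.exhaust)
    ultimately have "(v, h) \<notin> perturbing_pairs \<gamma> p" by simp
    from not_perturbing_pair_local[OF this] obtain J where J: "finite J"
      "\<forall>v' h'. (\<forall>q\<in>J. v' q = v q \<and> h' q = h q) \<longrightarrow> (v', h') \<notin> perturbing_pairs \<gamma> p"
      by blast
    let ?W = "{v'. \<forall>q\<in>J. v' q = v q} \<times> {h'. \<forall>q\<in>J. h' q = h q}"
    have "openin (prod_topology config_top config_top) ?W"
      by (simp add: openin_prod_Times_iff openin_cylinder[OF J(1)])
    moreover have "?W \<subseteq> - perturbing_pairs \<gamma> p" using J(2) by auto
    moreover have "x \<in> ?W" using x by simp
    ultimately show "\<exists>T. openin (prod_topology config_top config_top) T \<and> x \<in> T \<and>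
        T \<subseteq> - perturbing_pairs \<gamma> p"
      by blast
  qed
  then show ?thesis by (simp add: closedin_def Compl_eq_Diff_UNIV)
qed

text \<open>Integer configurations bounded by B form a compact set (Tychonoff).\<close>
lemma compactin_bounded:
  "compactin config_top {h :: ('n::finite \<Rightarrow> int) \<Rightarrow> int. \<forall>q. \<bar>h q\<bar> \<le> int B}"
proof -
  have box: "{h :: ('n \<Rightarrow> int) \<Rightarrow> int. \<forall>q. \<bar>h q\<bar> \<le> int B} = PiE UNIV (\<lambda>_. {- int B..int B})"
    by (auto simp: PiE_iff abs_le_iff) (metis minus_le_iff)+
  show ?thesis unfolding box config_top_def compactin_PiE
    by (auto intro: finite_imp_compactin)
qed

definition perturbable :: "int \<Rightarrow> nat \<Rightarrow> ('n::finite \<Rightarrow> int) \<Rightarrow> (('n \<Rightarrow> int) \<Rightarrow> int) set" where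
  "perturbable \<gamma> B p = fst ` (perturbing_pairs \<gamma> p \<inter> (R_inf \<gamma> \<times> {h. \<forall>q. \<bar>h q\<bar> \<le> int B}))"

text \<open>Projecting along the compact factor of bounded perturbations preserves closedness.\<close>
lemma closedin_perturbable:
  "closedin (subtopology config_top (R_inf \<gamma>)) (perturbable \<gamma> B (p :: 'n::finite \<Rightarrow> int))"
proof -
  let ?H = "{h :: ('n \<Rightarrow> int) \<Rightarrow> int. \<forall>q. \<bar>h q\<bar> \<le> int B}"
  have "compact_space (subtopology config_top ?H)"
    by (rule compact_space_subtopology[OF compactin_bounded])
  then have "closed_map (prod_topology (subtopology config_top (R_inf \<gamma>)) (subtopology config_top ?H))
      (subtopology config_top (R_inf \<gamma>)) fst"
    by (rule Abstract_Topological_Spaces.closed_map_fst)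
  moreover have "closedin (prod_topology (subtopology config_top (R_inf \<gamma>)) (subtopology config_top ?H))
      (perturbing_pairs \<gamma> p \<inter> (R_inf \<gamma> \<times> ?H))"
    unfolding subtopology_Times[symmetric] closedin_subtopology
    using closedin_perturbing_pairs by blast
  ultimately show ?thesis unfolding perturbable_def closed_map_def by blast
qed

lemma perturbation_iff_perturbable:
  assumes v: "v \<in> R_inf \<gamma>"
  shows "(\<exists>h\<in>linf_int. f_act \<gamma> h \<noteq> (\<lambda>_. 0) \<and> (\<lambda>q. v q + f_act \<gamma> h q) \<in> R_inf \<gamma>) \<longleftrightarrow>
    (\<exists>B p. v \<in> perturbable \<gamma> B (p :: 'n::finite \<Rightarrow> int))"
proof
  assume "\<exists>h\<in>linf_int. f_act \<gamma> h \<noteq> (\<lambda>_. 0) \<and> (\<lambda>q. v q + f_act \<gamma> h q) \<in> R_inf \<gamma>"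
  then obtain h where h: "h \<in> linf_int" "f_act \<gamma> h \<noteq> (\<lambda>_. 0)" "(\<lambda>q. v q + f_act \<gamma> h q) \<in> R_inf \<gamma>"
    by blast
  obtain B0 where B0: "\<And>q. \<bar>h q\<bar> \<le> B0" using h(1) unfolding linf_int_def by blast
  have "0 \<le> B0" using B0 abs_ge_zero order_trans by blast
  then have bounded: "\<forall>q. \<bar>h q\<bar> \<le> int (nat B0)" using B0 by simp
  obtain p where "f_act \<gamma> h p \<noteq> 0" using h(2) by auto
  then have "(v, h) \<in> perturbing_pairs \<gamma> p \<inter> (R_inf \<gamma> \<times> {h. \<forall>q. \<bar>h q\<bar> \<le> int (nat B0)})"
    using h(3) bounded v unfolding perturbing_pairs_def by simp
  then have "v \<in> perturbable \<gamma> (nat B0) p" unfolding perturbable_def by (rule image_eqI[rotated]) simp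
  then show "\<exists>B p. v \<in> perturbable \<gamma> B p" by blast
next
  assume "\<exists>B p. v \<in> perturbable \<gamma> B p"
  then obtain B p where "v \<in> perturbable \<gamma> B p" by blast
  then obtain h where h: "\<forall>q. \<bar>h q\<bar> \<le> int B" "f_act \<gamma> h p \<noteq> 0" "(\<lambda>q. v q + f_act \<gamma> h q) \<in> R_inf \<gamma>"
    unfolding perturbable_def perturbing_pairs_def by auto
  have "h \<in> linf_int" unfolding linf_int_def using h(1) by blast
  moreover have "f_act \<gamma> h \<noteq> (\<lambda>_. 0)"
  proof
    assume "f_act \<gamma> h = (\<lambda>_. 0)"
    then show False using h(2) by simp
  qed
  ultimately show "\<exists>h\<in>linf_int. f_act \<gamma> h \<noteq> (\<lambda>_. 0) \<and> (\<lambda>q. v q + f_act \<gamma> h q) \<in> R_inf \<gamma>"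
    using h(3) by blast
qed

lemma V_set_eq_INT:
  "(V_set \<gamma> :: (('n::finite \<Rightarrow> int) \<Rightarrow> int) set) = (\<Inter>(B, p)\<in>UNIV. R_inf \<gamma> - perturbable \<gamma> B p)"
proof (intro set_eqI)
  fix v :: "('n \<Rightarrow> int) \<Rightarrow> int"
  show "v \<in> V_set \<gamma> \<longleftrightarrow> v \<in> (\<Inter>(B, p)\<in>UNIV. R_inf \<gamma> - perturbable \<gamma> B p)"
  proof (cases "v \<in> R_inf \<gamma>")
    case True
    then show ?thesis unfolding V_set_iff perturbation_iff_perturbable[OF True] by blast
  qed (simp add: V_set_iff)
qed

lemma V_set_gdelta:
  "gdelta_in (subtopology config_top (R_inf \<gamma>)) (V_set \<gamma> :: (('n::finite \<Rightarrow> int) \<Rightarrow> int) set)"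
  unfolding gdelta_in_alt
proof
  show "V_set \<gamma> \<subseteq> topspace (subtopology config_top (R_inf \<gamma>))" using V_set_subset by simp
  have "openin (subtopology config_top (R_inf \<gamma>)) (R_inf \<gamma> - perturbable \<gamma> B p)"
    for B and p :: "'n \<Rightarrow> int"
    using openin_diff[OF openin_topspace closedin_perturbable[of \<gamma> B p]] by simp
  then show "(countable intersection_of openin (subtopology config_top (R_inf \<gamma>)))
      (V_set \<gamma> :: (('n \<Rightarrow> int) \<Rightarrow> int) set)"
    unfolding V_set_eq_INT
    by (intro countable_intersection_of_INT countable_intersection_of_inc) auto
qed

theorem proposition4p4:
  fixes \<gamma> :: int
  assumes "CARD('n::finite) \<ge> 2"
    and "\<gamma> \<ge> 2 * int CARD('n)"
  shows "gdelta_in (subtopology config_top (R_inf \<gamma>)) (V_set \<gamma> :: (('n \<Rightarrow> int) \<Rightarrow> int) set)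
       \<and> (subtopology config_top (R_inf \<gamma>)) closure_of (V_set \<gamma> :: (('n \<Rightarrow> int) \<Rightarrow> int) set)
           = R_inf \<gamma>"
  using V_set_gdelta V_set_dense[OF assms] by blast

end
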